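(* For every $\varepsilon>0$ and $n\in\mathbb{N}$ there exists $N\in\mathbb{N}$ such that every $N$-partitioned hypergraph $H$ with density $d$ has an $n$-partitioned subhypergraph $H_0$ with density at least $d-\varepsilon$ and with the following property: denoting by $I$ the index set of $H_0$, there exist vertices $\gamma_{ik}\in V_{ik}$, $i<k$, $i,k\in I$, such that for every $j\in I$ with $i<j<k$, the degree in the $(i,j,k)$-triad of $H_0$ of each top vertex of that triad is at most the degree of $\gamma_{ik}$ in that triad.
   Context: An $n$-partitioned hypergraph $H$ is a finite $3$-uniform hypergraph whose vertex set is partitioned into nonempty sets $V_{ij}$, $1\le i<j\le n$, such that every edge has, for some $1\le i<j<k\le n$, exactly one vertex in each of $V_{ij}$, $V_{ik}$, $V_{jk}$; the set of such edges is the $(i,j,k)$-triad, and vertices of $V_{ik}$ are its top vertices. The density of a triad is its number of edges divided by $|V_{ij}||V_{ik}||V_{jk}|$, and the density of $H$ is the minimum density of a triad. The degree of $v\in V_{ik}$ in the $(i,j,k)$-triad is the number of edges of the triad containing $v$ divided by $|V_{ij}||V_{jk}|$. For $I\subseteq[n]$, the induced subhypergraph with index set $I$ has parts $V_{ij}$, $i<j$, $i,j\in I$ (indexed by elements of $I$) and all edges of $H$ inside these parts; a subhypergraph is obtained from an induced subhypergraph by deleting some edges, and has the same index set. *)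

theory Defs
  imports Main "HOL.Real"
begin

definition partitioned_hypergraph :: "nat \<Rightarrow> (nat \<Rightarrow> nat \<Rightarrow> nat set) \<Rightarrow> nat set set \<Rightarrow> bool" where
  "partitioned_hypergraph N V E \<longleftrightarrow>
     (\<forall>i j. 1 \<le> i \<and> i < j \<and> j \<le> N \<longrightarrow> finite (V i j) \<and> V i j \<noteq> {}) \<and>
     (\<forall>i j i' j'. 1 \<le> i \<and> i < j \<and> j \<le> N \<and> 1 \<le> i' \<and> i' < j' \<and> j' \<le> N \<and> (i, j) \<noteq> (i', j')
        \<longrightarrow> V i j \<inter> V i' j' = {}) \<and>
     (\<forall>e\<in>E. \<exists>i j k. 1 \<le> i \<and> i < j \<and> j < k \<and> k \<le> N \<and>
        (\<exists>a\<in>V i j. \<exists>b\<in>V i k. \<exists>c\<in>V j k. e = {a, b, c}))"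

definition triad :: "(nat \<Rightarrow> nat \<Rightarrow> nat set) \<Rightarrow> nat set set \<Rightarrow> nat \<Rightarrow> nat \<Rightarrow> nat \<Rightarrow> nat set set" where
  "triad V E i j k = {e\<in>E. \<exists>a\<in>V i j. \<exists>b\<in>V i k. \<exists>c\<in>V j k. e = {a, b, c}}"

definition triad_density :: "(nat \<Rightarrow> nat \<Rightarrow> nat set) \<Rightarrow> nat set set \<Rightarrow> nat \<Rightarrow> nat \<Rightarrow> nat \<Rightarrow> real" where
  "triad_density V E i j k =
     real (card (triad V E i j k)) / (real (card (V i j)) * real (card (V i k)) * real (card (V j k)))"

text \<open>Degree of a (top) vertex v of V i k in the (i,j,k)-triad.\<close>
definition triad_degree :: "(nat \<Rightarrow> nat \<Rightarrow> nat set) \<Rightarrow> nat set set \<Rightarrow> nat \<Rightarrow> nat \<Rightarrow> nat \<Rightarrow> nat \<Rightarrow> real" where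
  "triad_degree V E i j k v =
     real (card {e \<in> triad V E i j k. v \<in> e}) / (real (card (V i j)) * real (card (V j k)))"

text \<open>Density of the hypergraph with index set I: minimum density of a triad.
  Convention: if there is no triad (|I| < 3) the density is 1.\<close>
definition hdensity :: "nat set \<Rightarrow> (nat \<Rightarrow> nat \<Rightarrow> nat set) \<Rightarrow> nat set set \<Rightarrow> real" where
  "hdensity I V E =
     (if \<not> (\<exists>i\<in>I. \<exists>j\<in>I. \<exists>k\<in>I. i < j \<and> j < k) then 1
      else Min {triad_density V E i j k | i j k. i \<in> I \<and> j \<in> I \<and> k \<in> I \<and> i < j \<and> j < k})"

definition induced_edges :: "nat set \<Rightarrow> (nat \<Rightarrow> nat \<Rightarrow> nat set) \<Rightarrow> nat set set \<Rightarrow> nat set set" where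
  "induced_edges I V E = {e\<in>E. e \<subseteq> \<Union>{V i j | i j. i \<in> I \<and> j \<in> I \<and> i < j}}"

end

theory Submission
  imports Defs "HOL-Library.Ramsey"
begin

text \<open>
  Put \<open>\<delta> = min \<epsilon> 1\<close> and call a vertex of \<open>V\<^sub>i\<^sub>k\<close> \<open>\<delta>\<close>-top in the triad \<open>(i,j,k)\<close> if at most
  \<open>\<delta> |V\<^sub>i\<^sub>k|\<close> vertices of \<open>V\<^sub>i\<^sub>k\<close> have larger degree there; at least \<open>\<delta> |V\<^sub>i\<^sub>k|\<close> vertices are
  \<open>\<delta>\<close>-top. Colour an index set \<open>Z\<close> by whether some vertex of \<open>V (min Z) (max Z)\<close> is \<open>\<delta>\<close>-top
  in every triad \<open>(min Z, j, max Z)\<close> with \<open>j \<in> Z\<close>. Ramsey's theorem gives a large index set that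
  is homogeneous for all set sizes up to \<open>n\<close>; double counting over its middle indices produces
  sets of each size with a common \<open>\<delta>\<close>-top vertex, so the homogeneous colour is the positive one.
  On an \<open>n\<close>-subset \<open>I\<close> pick such vertices \<open>\<gamma>\<^sub>i\<^sub>k\<close> and delete from every triad the edges
  whose top vertex has larger degree than \<open>\<gamma>\<^sub>i\<^sub>k\<close>. Then \<open>\<gamma>\<^sub>i\<^sub>k\<close> has maximal degree, and a triad
  loses at most \<open>\<delta> |V\<^sub>i\<^sub>j| |V\<^sub>i\<^sub>k| |V\<^sub>j\<^sub>k|\<close> edges, i.e. at most \<open>\<delta>\<close> of its density.
\<close>

section \<open>Ramsey's theorem for all subset sizes simultaneously\<close>

lemma ramsey_two_colours:
  "\<exists>N::nat. \<forall>A (f :: 'a set \<Rightarrow> bool). finite A \<and> N \<le> card A \<longrightarrow>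
     (\<exists>Y\<subseteq>A. card Y = M \<and> (\<forall>Z\<in>[Y]\<^bsup>r\<^esup>. \<forall>Z'\<in>[Y]\<^bsup>r\<^esup>. f Z = f Z'))"
proof -
  obtain N :: nat where N: "partn_lst {..<N} [M, M] r"
    using ramsey_full by blast
  have "\<exists>Y\<subseteq>A. card Y = M \<and> (\<forall>Z\<in>[Y]\<^bsup>r\<^esup>. \<forall>Z'\<in>[Y]\<^bsup>r\<^esup>. f Z = f Z')"
    if A: "finite A" "N \<le> card A" for A and f :: "'a set \<Rightarrow> bool"
  proof -
    obtain B where B: "B \<subseteq> A" "card B = N"
      using obtain_subset_with_card_n[OF A(2)] by metis
    obtain h where h: "bij_betw h {..<N} B"
      using ex_bij_betw_nat_finite[of B] B A(1) finite_subset by (metis atLeast0LessThan)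
    define g where "g X = (if f (h ` X) then 0 else 1 :: nat)" for X
    obtain i H where i: "i < 2" and H: "H \<in> [{..<N}]\<^bsup>M\<^esup>" and gH: "g ` [H]\<^bsup>r\<^esup> \<subseteq> {i}"
      using partn_lstE[OF N, of g 2] by (fastforce simp: g_def nth_Cons split: nat.splits)
    have HN: "H \<subseteq> {..<N}" "card H = M" using H by (auto simp: nsets_def)
    have inj: "inj_on h H" using h HN(1) by (metis bij_betw_def inj_on_subset)
    show ?thesis
    proof (intro exI conjI ballI)
      show "h ` H \<subseteq> A" using h HN(1) B(1) by (auto simp: bij_betw_def)
      show "card (h ` H) = M" using card_image[OF inj] HN(2) by simp
      fix Z Z' assume "Z \<in> [h ` H]\<^bsup>r\<^esup>" "Z' \<in> [h ` H]\<^bsup>r\<^esup>"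
      then obtain X X' where "X \<in> [H]\<^bsup>r\<^esup>" "Z = h ` X" "X' \<in> [H]\<^bsup>r\<^esup>" "Z' = h ` X'"
        by (metis inj nset_image_obtains)
      then show "f Z = f Z'" using gH by (auto simp: g_def split: if_splits)
    qed
  qed
  then show ?thesis by blast
qed

lemma ramsey_all_sizes:
  "\<exists>N::nat. \<forall>A (f :: nat \<Rightarrow> 'a set \<Rightarrow> bool). finite A \<and> N \<le> card A \<longrightarrow>
     (\<exists>Y\<subseteq>A. card Y = M \<and> (\<forall>r<K. \<forall>Z\<in>[Y]\<^bsup>r\<^esup>. \<forall>Z'\<in>[Y]\<^bsup>r\<^esup>. f r Z = f r Z'))"
proof (induction K arbitrary: M)
  case 0
  show ?case
    by (metis obtain_subset_with_card_n less_nat_zero_code)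
next
  case (Suc K)
  obtain M' :: nat where M': "\<forall>A (f :: 'a set \<Rightarrow> bool). finite A \<and> M' \<le> card A \<longrightarrow>
      (\<exists>Y\<subseteq>A. card Y = M \<and> (\<forall>Z\<in>[Y]\<^bsup>K\<^esup>. \<forall>Z'\<in>[Y]\<^bsup>K\<^esup>. f Z = f Z'))"
    using ramsey_two_colours by blast
  obtain N where N: "\<forall>A (f :: nat \<Rightarrow> 'a set \<Rightarrow> bool). finite A \<and> N \<le> card A \<longrightarrow>
      (\<exists>Y\<subseteq>A. card Y = M' \<and> (\<forall>r<K. \<forall>Z\<in>[Y]\<^bsup>r\<^esup>. \<forall>Z'\<in>[Y]\<^bsup>r\<^esup>. f r Z = f r Z'))"
    using Suc.IH by blast
  have "\<exists>Y\<subseteq>A. card Y = M \<and> (\<forall>r<Suc K. \<forall>Z\<in>[Y]\<^bsup>r\<^esup>. \<forall>Z'\<in>[Y]\<^bsup>r\<^esup>. f r Z = f r Z')"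
    if A: "finite A" "N \<le> card A" for A and f :: "nat \<Rightarrow> 'a set \<Rightarrow> bool"
  proof -
    obtain Y' where Y': "Y' \<subseteq> A" "card Y' = M'"
      and hom': "\<forall>r<K. \<forall>Z\<in>[Y']\<^bsup>r\<^esup>. \<forall>Z'\<in>[Y']\<^bsup>r\<^esup>. f r Z = f r Z'"
      using N A by blast
    obtain Y where Y: "Y \<subseteq> Y'" "card Y = M" and hom: "\<forall>Z\<in>[Y]\<^bsup>K\<^esup>. \<forall>Z'\<in>[Y]\<^bsup>K\<^esup>. f K Z = f K Z'"
      using M'[rule_format, of Y' "f K"] Y' A(1) finite_subset by blast
    have "f r Z = f r Z'" if "r < Suc K" "Z \<in> [Y]\<^bsup>r\<^esup>" "Z' \<in> [Y]\<^bsup>r\<^esup>" for r Z Z'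
    proof (cases "r = K")
      case True
      then show ?thesis using that hom by blast
    next
      case False
      then show ?thesis using that hom' nsets_mono[OF Y(1)] by (meson in_mono less_SucE)
    qed
    then show ?thesis using Y Y'(1) by blast
  qed
  then show ?case by blast
qed

section \<open>Large set systems have common points\<close>

definition top_fraction :: "real \<Rightarrow> ('a \<Rightarrow> 'b::linorder) \<Rightarrow> 'a set \<Rightarrow> 'a set" where
  "top_fraction \<epsilon> f T = {x\<in>T. real (card {v\<in>T. f x < f v}) \<le> \<epsilon> * card T}"

lemma card_top_fraction_ge:
  fixes \<epsilon> :: real
  assumes T: "finite T" and \<epsilon>: "0 \<le> \<epsilon>" "\<epsilon> \<le> 1"
  shows "\<epsilon> * card T \<le> card (top_fraction \<epsilon> f T)"
proof (cases "T \<subseteq> top_fraction \<epsilon> f T")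
  case True
  then have "top_fraction \<epsilon> f T = T" by (auto simp: top_fraction_def)
  then show ?thesis using \<epsilon> by (simp add: mult_left_le_one_le)
next
  case False
  define U where "U = T - top_fraction \<epsilon> f T"
  have U: "finite U" "U \<noteq> {}" using T False unfolding U_def by auto
  obtain x where x: "x \<in> U" "Max (f ` U) = f x"
    using obtains_MAX[OF U] by blast
  then have "\<forall>w\<in>U. f w \<le> f x" using U(1) by (metis Max_ge finite_imageI image_eqI)
  then have "{v\<in>T. f x < f v} \<subseteq> top_fraction \<epsilon> f T"
    using x(1) unfolding U_def by (auto simp: not_less[symmetric])
  then have "card {v\<in>T. f x < f v} \<le> card (top_fraction \<epsilon> f T)"
    using T by (simp add: card_mono top_fraction_def)
  moreover have "\<epsilon> * card T < card {v\<in>T. f x < f v}"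
    using x(1) unfolding U_def top_fraction_def by auto
  ultimately show ?thesis by linarith
qed

lemma sum_card_incidences:
  assumes "finite A" "finite T" "\<And>j. j \<in> A \<Longrightarrow> S j \<subseteq> T"
  shows "(\<Sum>x\<in>T. card {j\<in>A. x \<in> S j}) = (\<Sum>j\<in>A. card (S j))"
proof -
  have "(\<Sum>x\<in>T. card {j\<in>A. x \<in> S j}) = (\<Sum>x\<in>T. \<Sum>j\<in>A. if x \<in> S j then 1 else 0)"
    using assms(1) by (simp add: sum.If_cases Int_def)
  also have "\<dots> = (\<Sum>j\<in>A. \<Sum>x\<in>T. if x \<in> S j then 1 else 0)"
    by (rule sum.swap)
  also have "\<dots> = (\<Sum>j\<in>A. card (S j))"
  proof (rule sum.cong)
    fix j assume "j \<in> A"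
    then have "T \<inter> S j = S j" using assms(3) by blast
    then show "(\<Sum>x\<in>T. if x \<in> S j then 1 else 0) = card (S j)"
      using assms(2) by (simp add: sum.If_cases Int_def)
  qed simp
  finally show ?thesis .
qed

lemma ex_point_in_many:
  fixes c :: real
  assumes A: "finite A" and T: "finite T" "T \<noteq> {}"
    and S: "\<And>j. j \<in> A \<Longrightarrow> S j \<subseteq> T" "\<And>j. j \<in> A \<Longrightarrow> c * card T \<le> card (S j)"
  shows "\<exists>x\<in>T. card A * c \<le> card {j\<in>A. x \<in> S j}"
proof (rule ccontr)
  assume "\<not> ?thesis"
  then have "\<And>x. x \<in> T \<Longrightarrow> real (card {j\<in>A. x \<in> S j}) < card A * c"
    by (simp add: not_le)
  then have "(\<Sum>x\<in>T. real (card {j\<in>A. x \<in> S j})) < (\<Sum>x\<in>T. card A * c)"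
    using T by (rule sum_strict_mono[rotated 2])
  also have "\<dots> = (\<Sum>j\<in>A. c * card T)"
    by (simp add: algebra_simps)
  also have "\<dots> \<le> (\<Sum>j\<in>A. real (card (S j)))"
    using S(2) by (rule sum_mono)
  also have "\<dots> = real (\<Sum>x\<in>T. card {j\<in>A. x \<in> S j})"
    using sum_card_incidences[OF A T(1) S(1)] by simp
  finally show False by simp
qed

definition has_common_point ::
    "('i::linorder \<Rightarrow> 'i \<Rightarrow> 'a set) \<Rightarrow> ('i \<Rightarrow> 'i \<Rightarrow> 'i \<Rightarrow> 'a set) \<Rightarrow> 'i set \<Rightarrow> bool" where
  "has_common_point T S Z \<longleftrightarrow>
     (\<exists>\<gamma>\<in>T (Min Z) (Max Z). \<forall>j\<in>Z. Min Z < j \<and> j < Max Z \<longrightarrow> \<gamma> \<in> S (Min Z) j (Max Z))"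

lemma has_common_point_insert:
  assumes "finite J" "i < k" "\<forall>j\<in>J. i < j \<and> j < k"
  shows "has_common_point T S (insert i (insert k J)) \<longleftrightarrow> (\<exists>\<gamma>\<in>T i k. \<forall>j\<in>J. \<gamma> \<in> S i j k)"
proof -
  have "Min (insert i (insert k J)) = i" by (rule Min_eqI) (use assms in auto)
  moreover have "Max (insert i (insert k J)) = k" by (rule Max_eqI) (use assms in auto)
  ultimately show ?thesis
    using assms unfolding has_common_point_def by auto
qed

lemma card_insert_between:
  fixes i k :: "'i::linorder"
  assumes "finite J" "i < k" "\<forall>j\<in>J. i < j \<and> j < k"
  shows "card (insert i (insert k J)) = card J + 2"
  using assms by (auto simp: card_insert_if)

lemma Min_less_Max:
  fixes Y :: "'a::linorder set"
  assumes "finite Y" "1 < card Y"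
  shows "Min Y < Max Y"
proof -
  have "\<not> card Y \<le> Suc 0" using assms(2) by simp
  then obtain a b where ab: "a \<in> Y" "b \<in> Y" "a \<noteq> b"
    using card_le_Suc0_iff_eq[OF assms(1)] by blast
  then have "Min Y \<le> min a b" "max a b \<le> Max Y" using assms(1) by auto
  then show ?thesis using ab(3) by (simp add: min_def max_def split: if_splits)
qed

lemma ex_nsets_has_common_point:
  fixes \<epsilon> :: real
  assumes Y: "finite Y" and r: "2 \<le> r" "real (r - 2) < real (card Y - 2) * \<epsilon>"
    and T: "\<forall>i\<in>Y. \<forall>k\<in>Y. i < k \<longrightarrow> finite (T i k) \<and> T i k \<noteq> {}"
    and S: "\<forall>i\<in>Y. \<forall>j\<in>Y. \<forall>k\<in>Y. i < j \<and> j < k \<longrightarrow>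
              S i j k \<subseteq> T i k \<and> \<epsilon> * card (T i k) \<le> card (S i j k)"
  shows "\<exists>Z\<in>[Y]\<^bsup>r\<^esup>. has_common_point T S Z"
proof -
  define i k where "i = Min Y" and "k = Max Y"
  define Mid where "Mid = Y - {i, k}"
  have "card Y - 2 \<noteq> 0"
  proof
    assume "card Y - 2 = 0"
    then show False using r(2) by simp
  qed
  then have "1 < card Y" "Y \<noteq> {}" by auto
  then have ik: "i \<in> Y" "k \<in> Y" "i < k"
    using Y Min_less_Max[OF Y] unfolding i_def k_def by auto
  have mid: "i < j \<and> j < k" if "j \<in> Mid" for j
    using that Y unfolding Mid_def i_def k_def by (auto simp: order.not_eq_order_implies_strict)
  have card_Mid: "card Mid = card Y - 2"
    unfolding Mid_def using ik Y by (simp add: card_Diff_subset)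
  have S_Mid: "S i j k \<subseteq> T i k" "\<epsilon> * card (T i k) \<le> card (S i j k)" if "j \<in> Mid" for j
    using S ik mid[OF that] that unfolding Mid_def by auto
  obtain x where x: "x \<in> T i k" "card Mid * \<epsilon> \<le> card {j\<in>Mid. x \<in> S i j k}"
    using ex_point_in_many[of Mid "T i k" "\<lambda>j. S i j k" \<epsilon>] T S_Mid ik Y
    unfolding Mid_def by auto
  then have "real (r - 2) < card {j\<in>Mid. x \<in> S i j k}"
    using r(2) unfolding card_Mid by linarith
  then obtain J where J: "J \<subseteq> {j\<in>Mid. x \<in> S i j k}" "card J = r - 2"
    by (meson obtain_subset_with_card_n less_imp_le of_nat_less_iff)
  have J_between: "\<forall>j\<in>J. i < j \<and> j < k" using J(1) mid by blast
  have "J \<subseteq> Y" using J(1) unfolding Mid_def by blast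
  then have finJ: "finite J" using Y by (rule finite_subset)
  show ?thesis
  proof (intro bexI)
    show "has_common_point T S (insert i (insert k J))"
      using has_common_point_insert[OF finJ ik(3) J_between] J(1) x(1) by blast
    show "insert i (insert k J) \<in> [Y]\<^bsup>r\<^esup>"
      using card_insert_between[OF finJ ik(3) J_between] J ik r(1) Y unfolding Mid_def nsets_def
      by (auto intro: finite_subset)
  qed
qed

lemma has_common_point_if_homogeneous:
  fixes \<epsilon> :: real
  assumes Y: "finite Y" and large: "real n < real (card Y - 2) * \<epsilon>"
    and T: "\<forall>i\<in>Y. \<forall>k\<in>Y. i < k \<longrightarrow> finite (T i k) \<and> T i k \<noteq> {}"
    and S: "\<forall>i\<in>Y. \<forall>j\<in>Y. \<forall>k\<in>Y. i < j \<and> j < k \<longrightarrow>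
              S i j k \<subseteq> T i k \<and> \<epsilon> * card (T i k) \<le> card (S i j k)"
    and hom: "\<forall>r<Suc n. \<forall>Z\<in>[Y]\<^bsup>r\<^esup>. \<forall>Z'\<in>[Y]\<^bsup>r\<^esup>. has_common_point T S Z = has_common_point T S Z'"
    and Z: "Z \<subseteq> Y" "2 \<le> card Z" "card Z \<le> n"
  shows "has_common_point T S Z"
proof -
  have "real (card Z - 2) \<le> n" using Z(3) by simp
  then have "real (card Z - 2) < real (card Y - 2) * \<epsilon>" using large by linarith
  then obtain Z' where "Z' \<in> [Y]\<^bsup>card Z\<^esup>" "has_common_point T S Z'"
    using ex_nsets_has_common_point[OF Y Z(2) _ T S] by blast
  moreover have "Z \<in> [Y]\<^bsup>card Z\<^esup>" using Z(1) Y by (auto simp: nsets_def intro: finite_subset)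
  moreover have "card Z < Suc n" using Z(3) by simp
  ultimately show ?thesis using hom by blast
qed

lemma ex_subset_with_common_points:
  assumes Y: "finite Y" "n \<le> card Y"
    and good: "\<And>Z. Z \<subseteq> Y \<Longrightarrow> 2 \<le> card Z \<Longrightarrow> card Z \<le> n \<Longrightarrow> has_common_point T S Z"
  shows "\<exists>I\<subseteq>Y. card I = n \<and>
    (\<forall>i\<in>I. \<forall>k\<in>I. i < k \<longrightarrow> (\<exists>\<gamma>\<in>T i k. \<forall>j\<in>I. i < j \<and> j < k \<longrightarrow> \<gamma> \<in> S i j k))"
proof -
  obtain I where I: "I \<subseteq> Y" "card I = n"
    using obtain_subset_with_card_n[OF Y(2)] by metis
  have "\<exists>\<gamma>\<in>T i k. \<forall>j\<in>I. i < j \<and> j < k \<longrightarrow> \<gamma> \<in> S i j k" if ik: "i \<in> I" "k \<in> I" "i < k" for i k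
  proof -
    define J where "J = {j\<in>I. i < j \<and> j < k}"
    have finJ: "finite J" using I(1) Y(1) unfolding J_def by (auto intro: finite_subset)
    have J_between: "\<forall>j\<in>J. i < j \<and> j < k" unfolding J_def by blast
    have sub: "insert i (insert k J) \<subseteq> I" using ik unfolding J_def by blast
    have "card (insert i (insert k J)) \<le> n"
      using card_mono[OF finite_subset[OF I(1) Y(1)] sub] I(2) by simp
    then have "has_common_point T S (insert i (insert k J))"
      using good[of "insert i (insert k J)"] sub I(1) card_insert_between[OF finJ ik(3) J_between] by auto
    then have "\<exists>\<gamma>\<in>T i k. \<forall>j\<in>J. \<gamma> \<in> S i j k"
      using has_common_point_insert[OF finJ ik(3) J_between] by blast
    then show ?thesis unfolding J_def by blast
  qed
  then show ?thesis using I by blast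
qed

lemma ramsey_common_points:
  fixes \<epsilon> :: real and n :: nat
  assumes "\<epsilon> > 0"
  shows "\<exists>N::nat. \<forall>(A :: 'i::linorder set) (T :: 'i \<Rightarrow> 'i \<Rightarrow> 'a set) S.
    finite A \<and> N \<le> card A \<and>
    (\<forall>i\<in>A. \<forall>k\<in>A. i < k \<longrightarrow> finite (T i k) \<and> T i k \<noteq> {}) \<and>
    (\<forall>i\<in>A. \<forall>j\<in>A. \<forall>k\<in>A. i < j \<and> j < k \<longrightarrow>
       S i j k \<subseteq> T i k \<and> \<epsilon> * card (T i k) \<le> card (S i j k)) \<longrightarrow>
    (\<exists>I\<subseteq>A. card I = n \<and>
       (\<forall>i\<in>I. \<forall>k\<in>I. i < k \<longrightarrow> (\<exists>\<gamma>\<in>T i k. \<forall>j\<in>I. i < j \<and> j < k \<longrightarrow> \<gamma> \<in> S i j k)))"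
proof -
  \<comment> \<open>A homogeneous set of size \<open>M\<close> has at least \<open>L > n / \<epsilon>\<close> middle indices, which is what
    the averaging argument needs for all set sizes up to \<open>n\<close>.\<close>
  define L where "L = nat \<lceil>n / \<epsilon>\<rceil> + 1"
  have "n / \<epsilon> \<le> nat \<lceil>n / \<epsilon>\<rceil>" by linarith
  then have "n / \<epsilon> < L" unfolding L_def by simp
  then have L: "n < L * \<epsilon>" using assms by (simp add: divide_less_eq)
  define M where "M = max n (L + 2)"
  obtain N :: nat where N: "\<forall>(A :: 'i set) (f :: nat \<Rightarrow> 'i set \<Rightarrow> bool). finite A \<and> N \<le> card A \<longrightarrow>
      (\<exists>Y\<subseteq>A. card Y = M \<and> (\<forall>r<Suc n. \<forall>Z\<in>[Y]\<^bsup>r\<^esup>. \<forall>Z'\<in>[Y]\<^bsup>r\<^esup>. f r Z = f r Z'))"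
    using ramsey_all_sizes[of M "Suc n"] by (elim exE) (rule that)
  have "\<exists>I\<subseteq>A. card I = n \<and>
      (\<forall>i\<in>I. \<forall>k\<in>I. i < k \<longrightarrow> (\<exists>\<gamma>\<in>T i k. \<forall>j\<in>I. i < j \<and> j < k \<longrightarrow> \<gamma> \<in> S i j k))"
    if A: "finite A" "N \<le> card A"
      and T: "\<forall>i\<in>A. \<forall>k\<in>A. i < k \<longrightarrow> finite (T i k) \<and> T i k \<noteq> {}"
      and S: "\<forall>i\<in>A. \<forall>j\<in>A. \<forall>k\<in>A. i < j \<and> j < k \<longrightarrow>
                S i j k \<subseteq> T i k \<and> \<epsilon> * card (T i k) \<le> card (S i j k)"
    for A :: "'i set" and T :: "'i \<Rightarrow> 'i \<Rightarrow> 'a set" and S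
  proof -
    obtain Y where Y: "Y \<subseteq> A" "card Y = M"
      and hom: "\<forall>r<Suc n. \<forall>Z\<in>[Y]\<^bsup>r\<^esup>. \<forall>Z'\<in>[Y]\<^bsup>r\<^esup>. has_common_point T S Z = has_common_point T S Z'"
      using N[rule_format, of A "\<lambda>_. has_common_point T S"] A by blast
    have finY: "finite Y" using Y(1) A(1) by (rule finite_subset)
    have T_Y: "\<forall>i\<in>Y. \<forall>k\<in>Y. i < k \<longrightarrow> finite (T i k) \<and> T i k \<noteq> {}"
      using T Y(1) by blast
    have S_Y: "\<forall>i\<in>Y. \<forall>j\<in>Y. \<forall>k\<in>Y. i < j \<and> j < k \<longrightarrow>
                S i j k \<subseteq> T i k \<and> \<epsilon> * card (T i k) \<le> card (S i j k)"
      using S Y(1) by blast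
    have "real n < real (card Y - 2) * \<epsilon>"
    proof -
      have "real n < L * \<epsilon>" by (rule L)
      also have "\<dots> \<le> real (card Y - 2) * \<epsilon>"
        using assms Y(2) unfolding M_def by (intro mult_right_mono) auto
      finally show ?thesis .
    qed
    note good = has_common_point_if_homogeneous[OF finY this T_Y S_Y hom]
    have "n \<le> card Y" using Y(2) unfolding M_def by simp
    then obtain I where "I \<subseteq> Y" "card I = n"
      "\<forall>i\<in>I. \<forall>k\<in>I. i < k \<longrightarrow> (\<exists>\<gamma>\<in>T i k. \<forall>j\<in>I. i < j \<and> j < k \<longrightarrow> \<gamma> \<in> S i j k)"
      using ex_subset_with_common_points[OF finY _ good] by blast
    then show ?thesis using Y(1) by blast
  qed
  then show ?thesis by (intro exI[of _ N] allI impI) (elim conjE, assumption)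
qed

lemma partitioned_hypergraph_part:
  assumes "partitioned_hypergraph N V E" "1 \<le> i" "i < j" "j \<le> N"
  shows "finite (V i j)" "V i j \<noteq> {}"
  using assms unfolding partitioned_hypergraph_def by blast+

lemma partitioned_hypergraph_disjoint:
  assumes "partitioned_hypergraph N V E" "x \<in> V p q" "x \<in> V p' q'"
    and "1 \<le> p" "p < q" "q \<le> N" "1 \<le> p'" "p' < q'" "q' \<le> N"
  shows "p = p' \<and> q = q'"
proof (rule ccontr)
  assume "\<not> (p = p' \<and> q = q')"
  with assms(1,4-) have "V p q \<inter> V p' q' = {}"
    unfolding partitioned_hypergraph_def by blast
  with assms(2,3) show False by blast
qed

lemma triad_inter_top:
  assumes ph: "partitioned_hypergraph N V E" and ijk: "1 \<le> i" "i < j" "j < k" "k \<le> N"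
    and e: "e \<in> triad V E' i j k" and x: "x \<in> e" "x \<in> V i k"
  shows "e \<inter> V i k = {x}"
proof -
  obtain a b c where abc: "a \<in> V i j" "b \<in> V i k" "c \<in> V j k" "e = {a, b, c}"
    using e unfolding triad_def by blast
  have "a \<notin> V i k"
  proof
    assume "a \<in> V i k"
    have "i = i \<and> j = k"
      by (rule partitioned_hypergraph_disjoint[OF ph abc(1) \<open>a \<in> V i k\<close>]) (use ijk in linarith)+
    then show False using ijk by simp
  qed
  moreover have "c \<notin> V i k"
  proof
    assume "c \<in> V i k"
    have "j = i \<and> k = k"
      by (rule partitioned_hypergraph_disjoint[OF ph abc(3) \<open>c \<in> V i k\<close>]) (use ijk in linarith)+
    then show False using ijk by simp
  qed
  ultimately show ?thesis using abc x by blast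
qed

lemma triad_subset_image:
  "triad V E i j k \<subseteq> (\<lambda>(a, b, c). {a, b, c}) ` (V i j \<times> V i k \<times> V j k)"
  unfolding triad_def by force

lemma finite_triad:
  assumes "finite (V i j)" "finite (V i k)" "finite (V j k)"
  shows "finite (triad V E i j k)"
  by (rule finite_subset[OF triad_subset_image]) (use assms in simp)

lemma triad_edge_part:
  assumes ph: "partitioned_hypergraph N V E" and ijk: "1 \<le> i" "i < j" "j < k" "k \<le> N"
    and e: "e \<in> triad V E' i j k" and x: "x \<in> e" "x \<in> V p q" and pq: "1 \<le> p" "p < q" "q \<le> N"
  shows "(p, q) \<in> {(i, j), (i, k), (j, k)}"
proof -
  obtain a b c where abc: "a \<in> V i j" "b \<in> V i k" "c \<in> V j k" "e = {a, b, c}"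
    using e unfolding triad_def by blast
  have ranges: "1 \<le> j" "i < k" "j \<le> N" using ijk by linarith+
  have "x = a \<or> x = b \<or> x = c" using x(1) abc(4) by blast
  then show ?thesis
  proof (elim disjE)
    assume "x = a"
    then show ?thesis using partitioned_hypergraph_disjoint[OF ph x(2) _ pq ijk(1,2) ranges(3)] abc(1) by blast
  next
    assume "x = b"
    then show ?thesis using partitioned_hypergraph_disjoint[OF ph x(2) _ pq ijk(1) ranges(2) ijk(4)] abc(2) by blast
  next
    assume "x = c"
    then show ?thesis using partitioned_hypergraph_disjoint[OF ph x(2) _ pq ranges(1) ijk(3,4)] abc(3) by blast
  qed
qed

lemma triads_disjoint:
  assumes ph: "partitioned_hypergraph N V E"
    and ijk: "1 \<le> i" "i < j" "j < k" "k \<le> N" and ijk': "1 \<le> i'" "i' < j'" "j' < k'" "k' \<le> N"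
    and e: "e \<in> triad V E i j k" "e \<in> triad V E' i' j' k'"
  shows "i' = i \<and> j' = j \<and> k' = k"
proof -
  obtain a' b' c' where abc': "a' \<in> V i' j'" "b' \<in> V i' k'" "c' \<in> V j' k'" "e = {a', b', c'}"
    using e(2) unfolding triad_def by blast
  have ranges': "1 \<le> j'" "i' < k'" "j' \<le> N" using ijk' by linarith+
  note part = triad_edge_part[OF ph ijk e(1)]
  have "(i', j') \<in> {(i, j), (i, k), (j, k)}"
    using part[OF _ abc'(1) ijk'(1,2) ranges'(3)] abc'(4) by blast
  moreover have "(i', k') \<in> {(i, j), (i, k), (j, k)}"
    using part[OF _ abc'(2) ijk'(1) ranges'(2) ijk'(4)] abc'(4) by blast
  moreover have "(j', k') \<in> {(i, j), (i, k), (j, k)}"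
    using part[OF _ abc'(3) ranges'(1) ijk'(3,4)] abc'(4) by blast
  ultimately show ?thesis using ijk ijk' by (elim insertE emptyE; simp; linarith)
qed

lemma finite_triad_densities:
  assumes "finite I"
  shows "finite {triad_density V E i j k | i j k. i \<in> I \<and> j \<in> I \<and> k \<in> I \<and> i < j \<and> j < k}"
proof (rule finite_subset)
  show "{triad_density V E i j k | i j k. i \<in> I \<and> j \<in> I \<and> k \<in> I \<and> i < j \<and> j < k}
    \<subseteq> (\<lambda>(i, j, k). triad_density V E i j k) ` (I \<times> I \<times> I)" by force
qed (use assms in simp)

lemma hdensity_eq_Min:
  assumes "\<exists>i\<in>I. \<exists>j\<in>I. \<exists>k\<in>I. i < j \<and> j < k"
  shows "hdensity I V E = Min {triad_density V E i j k | i j k. i \<in> I \<and> j \<in> I \<and> k \<in> I \<and> i < j \<and> j < k}"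
  unfolding hdensity_def using assms by (intro if_not_P) blast

lemma hdensity_le_triad_density:
  assumes "finite I" "i \<in> I" "j \<in> I" "k \<in> I" "i < j" "j < k"
  shows "hdensity I V E \<le> triad_density V E i j k"
proof -
  have "hdensity I V E = Min {triad_density V E i j k | i j k. i \<in> I \<and> j \<in> I \<and> k \<in> I \<and> i < j \<and> j < k}"
    using assms by (intro hdensity_eq_Min) blast
  also have "\<dots> \<le> triad_density V E i j k"
    by (rule Min_le[OF finite_triad_densities[OF assms(1)]]) (use assms in blast)
  finally show ?thesis .
qed

lemma le_hdensity:
  assumes "finite I" "c \<le> 1"
    and c: "\<And>i j k. i \<in> I \<Longrightarrow> j \<in> I \<Longrightarrow> k \<in> I \<Longrightarrow> i < j \<Longrightarrow> j < k \<Longrightarrow> c \<le> triad_density V E i j k"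
  shows "c \<le> hdensity I V E"
proof (cases "\<exists>i\<in>I. \<exists>j\<in>I. \<exists>k\<in>I. i < j \<and> j < k")
  case True
  have "c \<le> Min {triad_density V E i j k | i j k. i \<in> I \<and> j \<in> I \<and> k \<in> I \<and> i < j \<and> j < k}"
  proof (rule Min.boundedI[OF finite_triad_densities[OF assms(1)]])
    show "{triad_density V E i j k | i j k. i \<in> I \<and> j \<in> I \<and> k \<in> I \<and> i < j \<and> j < k} \<noteq> {}"
      using True by blast
  next
    fix x assume "x \<in> {triad_density V E i j k | i j k. i \<in> I \<and> j \<in> I \<and> k \<in> I \<and> i < j \<and> j < k}"
    then obtain i j k where "x = triad_density V E i j k" "i \<in> I" "j \<in> I" "k \<in> I" "i < j" "j < k"
      by blast
    then show "c \<le> x" using c by simp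
  qed
  then show ?thesis using hdensity_eq_Min[OF True] by simp
next
  case False
  then have "hdensity I V E = 1" unfolding hdensity_def by (intro if_P)
  then show ?thesis using assms(2) by simp
qed

lemma triad_density_le_one:
  assumes "finite (V i j)" "finite (V i k)" "finite (V j k)"
  shows "triad_density V E i j k \<le> 1"
proof -
  define P where "P = real (card (V i j)) * real (card (V i k)) * real (card (V j k))"
  have "card (triad V E i j k) \<le> card ((\<lambda>(a, b, c). {a, b, c}) ` (V i j \<times> V i k \<times> V j k))"
    using assms by (intro card_mono[OF _ triad_subset_image]) simp
  also have "\<dots> \<le> card (V i j \<times> V i k \<times> V j k)"
    using assms by (intro card_image_le) simp
  finally have "real (card (triad V E i j k)) \<le> P"
    unfolding P_def card_cartesian_product of_nat_mult[symmetric] mult.assoc of_nat_le_iff .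
  moreover have "0 \<le> P" unfolding P_def by simp
  ultimately show ?thesis
    unfolding triad_density_def P_def[symmetric] by (cases "P = 0") (simp_all add: divide_le_eq_1)
qed

lemma hdensity_le_one:
  assumes ph: "partitioned_hypergraph N V E"
  shows "hdensity {1..N} V E \<le> 1"
proof (cases "\<exists>i\<in>{1..N}. \<exists>j\<in>{1..N}. \<exists>k\<in>{1..N}. i < j \<and> j < k")
  case True
  then obtain i j k where ijk: "i \<in> {1..N}" "j \<in> {1..N}" "k \<in> {1..N}" "i < j" "j < k"
    by blast
  then have "finite (V i j)" "finite (V i k)" "finite (V j k)"
    by (auto intro!: partitioned_hypergraph_part[OF ph])
  then have "triad_density V E i j k \<le> 1" by (rule triad_density_le_one)
  moreover have "hdensity {1..N} V E \<le> triad_density V E i j k"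
    using ijk by (intro hdensity_le_triad_density) simp_all
  ultimately show ?thesis by linarith
next
  case False
  then have "hdensity {1..N} V E = 1" unfolding hdensity_def by (intro if_P)
  then show ?thesis by simp
qed

section \<open>Vertices of large degree\<close>

definition top_vertices ::
    "real \<Rightarrow> nat set \<Rightarrow> (nat \<Rightarrow> nat \<Rightarrow> nat set) \<Rightarrow> nat set set \<Rightarrow> (nat \<Rightarrow> nat \<Rightarrow> nat) \<Rightarrow> bool" where
  "top_vertices \<delta> I V E \<gamma> \<longleftrightarrow> (\<forall>i\<in>I. \<forall>k\<in>I. i < k \<longrightarrow> \<gamma> i k \<in> V i k) \<and>
     (\<forall>i\<in>I. \<forall>j\<in>I. \<forall>k\<in>I. i < j \<and> j < k \<longrightarrow> \<gamma> i k \<in> top_fraction \<delta> (triad_degree V E i j k) (V i k))"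

lemma ex_top_vertices:
  assumes "\<forall>i\<in>I. \<forall>k\<in>I. i < k \<longrightarrow>
    (\<exists>\<gamma>\<in>V i k. \<forall>j\<in>I. i < j \<and> j < k \<longrightarrow> \<gamma> \<in> top_fraction \<delta> (triad_degree V E i j k) (V i k))"
  shows "\<exists>\<gamma>. top_vertices \<delta> I V E \<gamma>"
proof
  define \<gamma> where "\<gamma> i k = (SOME \<gamma>. \<gamma> \<in> V i k \<and>
    (\<forall>j\<in>I. i < j \<and> j < k \<longrightarrow> \<gamma> \<in> top_fraction \<delta> (triad_degree V E i j k) (V i k)))" for i k
  have \<gamma>: "\<gamma> i k \<in> V i k \<and> (\<forall>j\<in>I. i < j \<and> j < k \<longrightarrow> \<gamma> i k \<in> top_fraction \<delta> (triad_degree V E i j k) (V i k))"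
    if "i \<in> I" "k \<in> I" "i < k" for i k
  proof -
    have "\<exists>\<gamma>. \<gamma> \<in> V i k \<and>
        (\<forall>j\<in>I. i < j \<and> j < k \<longrightarrow> \<gamma> \<in> top_fraction \<delta> (triad_degree V E i j k) (V i k))"
      using assms that by blast
    then show ?thesis unfolding \<gamma>_def by (rule someI_ex)
  qed
  show "top_vertices \<delta> I V E \<gamma>"
    unfolding top_vertices_def
  proof (intro conjI ballI impI)
    fix i k assume "i \<in> I" "k \<in> I" "i < k"
    then show "\<gamma> i k \<in> V i k" using \<gamma> by blast
  next
    fix i j k assume "i \<in> I" "j \<in> I" "k \<in> I" "i < j \<and> j < k"
    then show "\<gamma> i k \<in> top_fraction \<delta> (triad_degree V E i j k) (V i k)"
      using \<gamma>[of i k] by auto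
  qed
qed

lemma ex_index_set_with_top_vertices:
  fixes \<delta> :: real and n :: nat
  assumes \<delta>: "0 < \<delta>" "\<delta> \<le> 1"
  shows "\<exists>N::nat. \<forall>V E. partitioned_hypergraph N V E \<longrightarrow>
    (\<exists>I \<gamma>. I \<subseteq> {1..N} \<and> card I = n \<and> top_vertices \<delta> I V E \<gamma>)"
proof -
  obtain N :: nat where N: "\<forall>(A :: nat set) (T :: nat \<Rightarrow> nat \<Rightarrow> nat set) S.
    finite A \<and> N \<le> card A \<and>
    (\<forall>i\<in>A. \<forall>k\<in>A. i < k \<longrightarrow> finite (T i k) \<and> T i k \<noteq> {}) \<and>
    (\<forall>i\<in>A. \<forall>j\<in>A. \<forall>k\<in>A. i < j \<and> j < k \<longrightarrow> S i j k \<subseteq> T i k \<and> \<delta> * card (T i k) \<le> card (S i j k)) \<longrightarrow>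
    (\<exists>I\<subseteq>A. card I = n \<and>
       (\<forall>i\<in>I. \<forall>k\<in>I. i < k \<longrightarrow> (\<exists>\<gamma>\<in>T i k. \<forall>j\<in>I. i < j \<and> j < k \<longrightarrow> \<gamma> \<in> S i j k)))"
    using ramsey_common_points[OF \<delta>(1), where n = n] by (elim exE) (rule that)
  have "\<exists>I \<gamma>. I \<subseteq> {1..N} \<and> card I = n \<and> top_vertices \<delta> I V E \<gamma>"
    if ph: "partitioned_hypergraph N V E" for V E
  proof -
    let ?S = "\<lambda>i j k. top_fraction \<delta> (triad_degree V E i j k) (V i k)"
    have parts: "\<forall>i\<in>{1..N}. \<forall>k\<in>{1..N}. i < k \<longrightarrow> finite (V i k) \<and> V i k \<noteq> {}"
      using partitioned_hypergraph_part[OF ph] by auto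
    moreover have "\<forall>i\<in>{1..N}. \<forall>j\<in>{1..N}. \<forall>k\<in>{1..N}. i < j \<and> j < k \<longrightarrow>
        ?S i j k \<subseteq> V i k \<and> \<delta> * card (V i k) \<le> card (?S i j k)"
    proof (intro ballI impI conjI)
      fix i j k assume "i \<in> {1..N}" "j \<in> {1..N}" "k \<in> {1..N}" "i < j \<and> j < k"
      then show "\<delta> * card (V i k) \<le> card (?S i j k)"
        using parts \<delta> by (intro card_top_fraction_ge) auto
    qed (auto simp: top_fraction_def)
    ultimately have "\<exists>I\<subseteq>{1..N}. card I = n \<and>
        (\<forall>i\<in>I. \<forall>k\<in>I. i < k \<longrightarrow> (\<exists>\<gamma>\<in>V i k. \<forall>j\<in>I. i < j \<and> j < k \<longrightarrow> \<gamma> \<in> ?S i j k))"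
      by (intro N[rule_format]) simp_all
    then obtain I where I: "I \<subseteq> {1..N}" "card I = n"
      and ex: "\<forall>i\<in>I. \<forall>k\<in>I. i < k \<longrightarrow> (\<exists>\<gamma>\<in>V i k. \<forall>j\<in>I. i < j \<and> j < k \<longrightarrow> \<gamma> \<in> ?S i j k)"
      by blast
    obtain \<gamma> where "top_vertices \<delta> I V E \<gamma>" using ex_top_vertices[OF ex] ..
    then show ?thesis using I by blast
  qed
  then show ?thesis by (intro exI[of _ N] allI impI)
qed

section \<open>Pruning the triads\<close>

definition pruned_edges ::
    "nat set \<Rightarrow> (nat \<Rightarrow> nat \<Rightarrow> nat set) \<Rightarrow> nat set set \<Rightarrow> (nat \<Rightarrow> nat \<Rightarrow> nat) \<Rightarrow> nat set set" where
  "pruned_edges I V E \<gamma> = {e. \<exists>i\<in>I. \<exists>j\<in>I. \<exists>k\<in>I. i < j \<and> j < k \<and> e \<in> triad V E i j k \<and>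
     (\<forall>b\<in>e \<inter> V i k. triad_degree V E i j k b \<le> triad_degree V E i j k (\<gamma> i k))}"

lemma pruned_edges_subset_induced_edges: "pruned_edges I V E \<gamma> \<subseteq> induced_edges I V E"
proof
  fix e assume "e \<in> pruned_edges I V E \<gamma>"
  then obtain i j k a b c where ijk: "i \<in> I" "j \<in> I" "k \<in> I" "i < j" "j < k" and "e \<in> E"
    and abc: "a \<in> V i j" "b \<in> V i k" "c \<in> V j k" "e = {a, b, c}"
    unfolding pruned_edges_def triad_def by blast
  moreover have "e \<subseteq> \<Union>{V i j | i j. i \<in> I \<and> j \<in> I \<and> i < j}"
    using ijk abc by (auto intro: less_trans)
  ultimately show "e \<in> induced_edges I V E" unfolding induced_edges_def by blast
qed

lemma triad_pruned_edges:
  assumes ph: "partitioned_hypergraph N V E" and I: "I \<subseteq> {1..N}"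
    and ijk: "i \<in> I" "j \<in> I" "k \<in> I" "i < j" "j < k"
  shows "triad V (pruned_edges I V E \<gamma>) i j k =
    {e \<in> triad V E i j k. \<forall>b\<in>e \<inter> V i k. triad_degree V E i j k b \<le> triad_degree V E i j k (\<gamma> i k)}"
proof (intro equalityI subsetI)
  fix e assume e: "e \<in> triad V (pruned_edges I V E \<gamma>) i j k"
  then obtain i' j' k' where ijk': "i' \<in> I" "j' \<in> I" "k' \<in> I" "i' < j'" "j' < k'"
    and e': "e \<in> triad V E i' j' k'"
    and deg: "\<forall>b\<in>e \<inter> V i' k'. triad_degree V E i' j' k' b \<le> triad_degree V E i' j' k' (\<gamma> i' k')"
    unfolding triad_def pruned_edges_def by blast
  have "1 \<le> i" "k \<le> N" "1 \<le> i'" "k' \<le> N" using I ijk ijk' by auto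
  then have "i = i' \<and> j = j' \<and> k = k'"
    using triads_disjoint[OF ph _ ijk'(4,5) _ _ ijk(4,5) _ e' e] by blast
  then show "e \<in> {e \<in> triad V E i j k. \<forall>b\<in>e \<inter> V i k. triad_degree V E i j k b \<le> triad_degree V E i j k (\<gamma> i k)}"
    using e' deg by blast
next
  fix e assume "e \<in> {e \<in> triad V E i j k. \<forall>b\<in>e \<inter> V i k. triad_degree V E i j k b \<le> triad_degree V E i j k (\<gamma> i k)}"
  then show "e \<in> triad V (pruned_edges I V E \<gamma>) i j k"
    using ijk unfolding pruned_edges_def triad_def by blast
qed

lemma triad_degree_nonneg: "0 \<le> triad_degree V E i j k v"
  by (simp add: triad_degree_def)

lemma triad_degree_pruned_top:
  assumes ph: "partitioned_hypergraph N V E" and I: "I \<subseteq> {1..N}"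
    and ijk: "i \<in> I" "j \<in> I" "k \<in> I" "i < j" "j < k" and \<gamma>: "\<gamma> i k \<in> V i k"
  shows "triad_degree V (pruned_edges I V E \<gamma>) i j k (\<gamma> i k) = triad_degree V E i j k (\<gamma> i k)"
proof -
  have r: "1 \<le> i" "i < j" "j < k" "k \<le> N" using I ijk by auto
  have "\<forall>b\<in>e \<inter> V i k. triad_degree V E i j k b \<le> triad_degree V E i j k (\<gamma> i k)"
    if "e \<in> triad V E i j k" "\<gamma> i k \<in> e" for e
    using triad_inter_top[OF ph r that \<gamma>] by simp
  then have "{e \<in> triad V (pruned_edges I V E \<gamma>) i j k. \<gamma> i k \<in> e} = {e \<in> triad V E i j k. \<gamma> i k \<in> e}"
    unfolding triad_pruned_edges[OF ph I ijk] by blast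
  then show ?thesis unfolding triad_degree_def by simp
qed

lemma triad_degree_pruned_le:
  assumes ph: "partitioned_hypergraph N V E" and I: "I \<subseteq> {1..N}"
    and ijk: "i \<in> I" "j \<in> I" "k \<in> I" "i < j" "j < k" and \<gamma>: "\<gamma> i k \<in> V i k" and v: "v \<in> V i k"
  shows "triad_degree V (pruned_edges I V E \<gamma>) i j k v \<le> triad_degree V (pruned_edges I V E \<gamma>) i j k (\<gamma> i k)"
proof -
  let ?d = "triad_degree V E i j k"
  let ?d\<^sub>0 = "triad_degree V (pruned_edges I V E \<gamma>) i j k"
  have r: "1 \<le> i" "i < j" "j < k" "k \<le> N" using I ijk by auto
  have top_v: "(\<forall>b\<in>e \<inter> V i k. ?d b \<le> ?d (\<gamma> i k)) \<longleftrightarrow> ?d v \<le> ?d (\<gamma> i k)"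
    if "e \<in> triad V E i j k" "v \<in> e" for e
    using triad_inter_top[OF ph r that v] by simp
  have edges_v: "{e \<in> triad V (pruned_edges I V E \<gamma>) i j k. v \<in> e} =
      {e \<in> triad V E i j k. v \<in> e \<and> ?d v \<le> ?d (\<gamma> i k)}"
    unfolding triad_pruned_edges[OF ph I ijk] using top_v by auto
  show ?thesis
  proof (cases "?d v \<le> ?d (\<gamma> i k)")
    case True
    have "finite (triad V E i j k)"
      using r by (intro finite_triad partitioned_hypergraph_part[OF ph]) linarith+
    then have "?d\<^sub>0 v \<le> ?d v"
      unfolding triad_degree_def edges_v by (intro divide_right_mono) (auto intro: card_mono)
    then show ?thesis using True triad_degree_pruned_top[where \<gamma> = \<gamma>, OF ph I ijk \<gamma>] by simp
  next
    case False
    then have "?d\<^sub>0 v = 0" unfolding triad_degree_def edges_v by simp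
    then show ?thesis using triad_degree_nonneg by simp
  qed
qed

lemma card_triad_le_card_triad_pruned:
  assumes ph: "partitioned_hypergraph N V E" and I: "I \<subseteq> {1..N}"
    and ijk: "i \<in> I" "j \<in> I" "k \<in> I" "i < j" "j < k"
  shows "card (triad V E i j k) \<le> card (triad V (pruned_edges I V E \<gamma>) i j k) +
    card (V i j) * card {v \<in> V i k. triad_degree V E i j k (\<gamma> i k) < triad_degree V E i j k v} * card (V j k)"
proof -
  let ?d = "triad_degree V E i j k"
  define B where "B = {v \<in> V i k. ?d (\<gamma> i k) < ?d v}"
  define T T\<^sub>0 where "T = triad V E i j k" and "T\<^sub>0 = triad V (pruned_edges I V E \<gamma>) i j k"
  have r: "1 \<le> i" "i < j" "j < k" "k \<le> N" using I ijk by auto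
  have fin: "finite (V i j)" "finite (V i k)" "finite (V j k)"
    using r by (intro partitioned_hypergraph_part[OF ph]; linarith)+
  have "T - T\<^sub>0 \<subseteq> (\<lambda>(a, b, c). {a, b, c}) ` (V i j \<times> B \<times> V j k)"
  proof
    fix e assume e: "e \<in> T - T\<^sub>0"
    then obtain a b c where abc: "a \<in> V i j" "b \<in> V i k" "c \<in> V j k" "e = {a, b, c}"
      unfolding T_def triad_def by blast
    obtain b' where "b' \<in> e \<inter> V i k" "\<not> ?d b' \<le> ?d (\<gamma> i k)"
      using e unfolding T_def T\<^sub>0_def triad_pruned_edges[OF ph I ijk] by blast
    moreover have "e \<inter> V i k = {b}"
      using triad_inter_top[OF ph r _ _ abc(2)] e abc(4) unfolding T_def by blast
    ultimately have "b \<in> B" using abc(2) unfolding B_def by auto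
    then show "e \<in> (\<lambda>(a, b, c). {a, b, c}) ` (V i j \<times> B \<times> V j k)"
      using abc by force
  qed
  moreover have finP: "finite (V i j \<times> B \<times> V j k)" using fin unfolding B_def by simp
  ultimately have "card (T - T\<^sub>0) \<le> card ((\<lambda>(a, b, c). {a, b, c}) ` (V i j \<times> B \<times> V j k))"
    by (intro card_mono) simp_all
  also have "\<dots> \<le> card (V i j \<times> B \<times> V j k)" using finP by (rule card_image_le)
  finally have "card (T - T\<^sub>0) \<le> card (V i j \<times> B \<times> V j k)" .
  moreover have "card T \<le> card T\<^sub>0 + card (T - T\<^sub>0)"
  proof -
    have "T\<^sub>0 \<subseteq> T" unfolding T_def T\<^sub>0_def triad_pruned_edges[OF ph I ijk] by blast
    moreover have "finite T" unfolding T_def using fin by (rule finite_triad)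
    ultimately show ?thesis using card_Diff_subset[of T\<^sub>0 T] card_mono[of T T\<^sub>0] finite_subset by fastforce
  qed
  ultimately show ?thesis
    unfolding T_def T\<^sub>0_def B_def by (simp add: card_cartesian_product)
qed

lemma triad_density_pruned_ge:
  assumes ph: "partitioned_hypergraph N V E" and I: "I \<subseteq> {1..N}"
    and ijk: "i \<in> I" "j \<in> I" "k \<in> I" "i < j" "j < k"
    and \<gamma>: "\<gamma> i k \<in> top_fraction \<epsilon> (triad_degree V E i j k) (V i k)"
  shows "triad_density V E i j k - \<epsilon> \<le> triad_density V (pruned_edges I V E \<gamma>) i j k"
proof -
  define a b c where "a = real (card (V i j))" and "b = real (card (V i k))" and "c = real (card (V j k))"
  define B where "B = real (card {v \<in> V i k. triad_degree V E i j k (\<gamma> i k) < triad_degree V E i j k v})"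
  have r: "1 \<le> i" "i < j" "j < k" "k \<le> N" using I ijk by auto
  have "1 \<le> j" "i < k" "j \<le> N" using r by linarith+
  then have pos: "0 < a" "0 < b" "0 < c" unfolding a_def b_def c_def
    using partitioned_hypergraph_part[OF ph] r by (simp_all add: card_gt_0_iff)
  have "B \<le> \<epsilon> * b" using \<gamma> unfolding B_def b_def top_fraction_def by simp
  then have "a * B * c \<le> a * (\<epsilon> * b) * c" using pos by (intro mult_right_mono mult_left_mono) auto
  also have "\<dots> = \<epsilon> * (a * b * c)" by (simp add: algebra_simps)
  finally have "a * B * c \<le> \<epsilon> * (a * b * c)" .
  moreover have "real (card (triad V E i j k)) \<le> card (triad V (pruned_edges I V E \<gamma>) i j k) + a * B * c"
    using of_nat_mono[OF card_triad_le_card_triad_pruned[OF ph I ijk, of \<gamma>], where 'a=real]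
    unfolding a_def b_def c_def B_def by simp
  ultimately have "real (card (triad V E i j k)) - \<epsilon> * (a * b * c) \<le> card (triad V (pruned_edges I V E \<gamma>) i j k)"
    by linarith
  then have "(real (card (triad V E i j k)) - \<epsilon> * (a * b * c)) / (a * b * c)
      \<le> card (triad V (pruned_edges I V E \<gamma>) i j k) / (a * b * c)"
    using pos by (simp add: divide_right_mono)
  then show ?thesis
    unfolding triad_density_def a_def[symmetric] b_def[symmetric] c_def[symmetric]
    using pos by (simp add: diff_divide_distrib)
qed

lemma hdensity_pruned_ge:
  assumes ph: "partitioned_hypergraph N V E" and I: "I \<subseteq> {1..N}"
    and top: "top_vertices \<delta> I V E \<gamma>" and "0 \<le> \<delta>"
  shows "hdensity {1..N} V E - \<delta> \<le> hdensity I V (pruned_edges I V E \<gamma>)"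
proof (rule le_hdensity)
  show "finite I" using I by (rule finite_subset) simp
  show "hdensity {1..N} V E - \<delta> \<le> 1" using hdensity_le_one[OF ph] \<open>0 \<le> \<delta>\<close> by linarith
  fix i j k assume ijk: "i \<in> I" "j \<in> I" "k \<in> I" "i < j" "j < k"
  have "hdensity {1..N} V E \<le> triad_density V E i j k"
    using ijk I by (intro hdensity_le_triad_density) auto
  moreover have "\<gamma> i k \<in> top_fraction \<delta> (triad_degree V E i j k) (V i k)"
    using top ijk unfolding top_vertices_def by blast
  ultimately show "hdensity {1..N} V E - \<delta> \<le> triad_density V (pruned_edges I V E \<gamma>) i j k"
    using triad_density_pruned_ge[where \<gamma> = \<gamma>, OF ph I ijk] by fastforce
qed

lemma pruned_edges_max_degree:
  assumes ph: "partitioned_hypergraph N V E" and I: "I \<subseteq> {1..N}" and top: "top_vertices \<delta> I V E \<gamma>"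
  shows "\<forall>i\<in>I. \<forall>k\<in>I. i < k \<longrightarrow> (\<exists>\<gamma>'\<in>V i k. \<forall>j\<in>I. i < j \<and> j < k \<longrightarrow>
    (\<forall>v\<in>V i k. triad_degree V (pruned_edges I V E \<gamma>) i j k v \<le> triad_degree V (pruned_edges I V E \<gamma>) i j k \<gamma>'))"
proof (intro ballI impI)
  fix i k assume ik: "i \<in> I" "k \<in> I" "i < k"
  then have \<gamma>: "\<gamma> i k \<in> V i k" using top unfolding top_vertices_def by blast
  show "\<exists>\<gamma>'\<in>V i k. \<forall>j\<in>I. i < j \<and> j < k \<longrightarrow>
      (\<forall>v\<in>V i k. triad_degree V (pruned_edges I V E \<gamma>) i j k v \<le> triad_degree V (pruned_edges I V E \<gamma>) i j k \<gamma>')"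
  proof (intro bexI[of _ "\<gamma> i k"] ballI impI)
    fix j v assume "j \<in> I" "i < j \<and> j < k" "v \<in> V i k"
    then show "triad_degree V (pruned_edges I V E \<gamma>) i j k v \<le> triad_degree V (pruned_edges I V E \<gamma>) i j k (\<gamma> i k)"
      using triad_degree_pruned_le[where \<gamma> = \<gamma>, OF ph I ik(1) _ ik(2) _ _ \<gamma>] by blast
  qed (rule \<gamma>)
qed

theorem lemma5p1:
  fixes \<epsilon> :: real and n :: nat
  assumes "\<epsilon> > 0"
  shows "\<exists>N::nat. \<forall>V E d. partitioned_hypergraph N V E \<and> d = hdensity {1..N} V E \<longrightarrow>
           (\<exists>I E0. I \<subseteq> {1..N} \<and> card I = n \<and> E0 \<subseteq> induced_edges I V E \<and>
              hdensity I V E0 \<ge> d - \<epsilon> \<and>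
              (\<forall>i\<in>I. \<forall>k\<in>I. i < k \<longrightarrow>
                 (\<exists>\<gamma>\<in>V i k. \<forall>j\<in>I. i < j \<and> j < k \<longrightarrow>
                    (\<forall>v\<in>V i k. triad_degree V E0 i j k v \<le> triad_degree V E0 i j k \<gamma>))))"
proof -
  define \<delta> where "\<delta> = min \<epsilon> 1"
  have \<delta>: "0 < \<delta>" "\<delta> \<le> 1" "\<delta> \<le> \<epsilon>" using assms unfolding \<delta>_def by auto
  obtain N :: nat where N: "\<forall>V E. partitioned_hypergraph N V E \<longrightarrow>
      (\<exists>I \<gamma>. I \<subseteq> {1..N} \<and> card I = n \<and> top_vertices \<delta> I V E \<gamma>)"
    using ex_index_set_with_top_vertices[OF \<delta>(1,2), where n = n] by (elim exE) (rule that)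
  have pruned: "\<exists>I E0. I \<subseteq> {1..N} \<and> card I = n \<and> E0 \<subseteq> induced_edges I V E \<and>
      hdensity I V E0 \<ge> hdensity {1..N} V E - \<epsilon> \<and>
      (\<forall>i\<in>I. \<forall>k\<in>I. i < k \<longrightarrow> (\<exists>\<gamma>\<in>V i k. \<forall>j\<in>I. i < j \<and> j < k \<longrightarrow>
         (\<forall>v\<in>V i k. triad_degree V E0 i j k v \<le> triad_degree V E0 i j k \<gamma>)))"
    if ph: "partitioned_hypergraph N V E" for V E
  proof -
    obtain I \<gamma> where I: "I \<subseteq> {1..N}" "card I = n" and top: "top_vertices \<delta> I V E \<gamma>"
      using N[rule_format, OF ph] by blast
    have dens: "hdensity {1..N} V E - \<epsilon> \<le> hdensity I V (pruned_edges I V E \<gamma>)"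
      using hdensity_pruned_ge[OF ph I(1) top] \<delta> by linarith
    show ?thesis
      by (intro exI[of _ I] exI[of _ "pruned_edges I V E \<gamma>"] conjI)
        (fact I pruned_edges_subset_induced_edges dens pruned_edges_max_degree[OF ph I(1) top])+
  qed
  then show ?thesis by (intro exI[of _ N] allI impI) (elim conjE, hypsubst, erule pruned)
qed

end
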